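(* Let $q:\mathsf D\to\mathbb R$ be a query with sensitivity $\Delta q$, and let $b>0$ be a random scale parameter such that $1/b$ has moment generating function $M_{1/b}(t)=\mathbb E[e^{t/b}]$. Then the R$^2$DP Laplace mechanism $\mathcal M_q(d,b)=q(d)+\mathrm{Lap}(b)$ is $$\ln\left[\frac{\mathbb E(1/b)}{\frac{d M_{1/b}(t)}{dt}\big|_{t=-\Delta q}}\right]\text{-differentially private.}$$
   Context: $\mathrm{Lap}(b)$ is the zero-mean Laplace distribution with density $\frac{1}{2b}e^{-|x|/b}$. In the R$^2$DP Laplace mechanism the scale $b$ is itself random (drawn from a fixed distribution on $(0,\infty)$, independently of the data) and, conditionally on $b$, noise $\mathrm{Lap}(b)$ is added to $q(d)$. Two datasets $d,d'$ are adjacent if one is obtained from the other by adding or removing the data of one individual; the sensitivity is $\Delta q=\max_{d,d'\text{ adjacent}}|q(d)-q(d')|$. A randomized mechanism $\mathcal M$ is $\epsilon$-differentially private if $\mathbb P(\mathcal M(d)\in S)\le e^{\epsilon}\mathbb P(\mathcal M(d')\in S)$ for all adjacent $d,d'$ and all measurable $S$. Here $\frac{dM_{1/b}}{dt}(t)=\mathbb E[\frac1b e^{t/b}]$. *)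

theory Defs
  imports "HOL-Probability.Probability" "HOL-Library.Multiset"
begin

definition adjacent :: "'a multiset \<Rightarrow> 'a multiset \<Rightarrow> bool" where
  "adjacent d d' \<longleftrightarrow> (\<exists>x. d' = d + {#x#} \<or> d = d' + {#x#})"

definition sensitivity :: "('a multiset \<Rightarrow> real) \<Rightarrow> real" where
  "sensitivity q = (SUP p \<in> {(d, d'). adjacent d d'}. \<bar>q (fst p) - q (snd p)\<bar>)"

definition lap_density :: "real \<Rightarrow> real \<Rightarrow> real" where
  "lap_density b x = exp (- \<bar>x\<bar> / b) / (2 * b)"

definition lap_measure :: "real \<Rightarrow> real \<Rightarrow> real measure" where
  "lap_measure b mu = density lborel (\<lambda>x. ennreal (lap_density b (x - mu)))"

definition r2dp_laplace :: "real measure \<Rightarrow> ('a multiset \<Rightarrow> real) \<Rightarrow> 'a multiset \<Rightarrow> real set \<Rightarrow> ennreal" where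
  "r2dp_laplace B q d S = (\<integral>\<^sup>+ b. emeasure (lap_measure b (q d)) S \<partial>B)"

definition differentially_private :: "real \<Rightarrow> ('a multiset \<Rightarrow> real set \<Rightarrow> ennreal) \<Rightarrow> bool" where
  "differentially_private eps M \<longleftrightarrow>
     (\<forall>d d'. adjacent d d' \<longrightarrow> (\<forall>S \<in> sets borel. M d S \<le> ennreal (exp eps) * M d' S))"

text \<open>Moment generating function of 1/b, and its derivative as given in the paper:
  dM/dt (t) = E[(1/b) e^(t/b)].\<close>
definition mgf_inv :: "real measure \<Rightarrow> real \<Rightarrow> real" where
  "mgf_inv B t = (\<integral> b. exp (t / b) \<partial>B)"

definition dmgf_inv :: "real measure \<Rightarrow> real \<Rightarrow> real" where
  "dmgf_inv B t = (\<integral> b. (1 / b) * exp (t / b) \<partial>B)"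

end

(*
  Write M' = dmgf_inv B, so that M'(t) = E[(1/b) e^(t/b)]. Averaging the Laplace densities over
  the scale, the mechanism on dataset d has output density x |-> M'(-|x - q d|) / 2. Chebyshev's
  correlation inequality for the similarly ordered functions e^(-a/b) and e^(-Delta/b), with
  weight 1/b, gives M'(-a) M'(-Delta) <= M'(0) M'(-a - Delta). As M' increases on (-inf, 0] and
  |x - q d'| <= |x - q d| + Delta for adjacent d, d', the ratio of the output densities on d and
  on d' is bounded by M'(0) / M'(-Delta) = E(1/b) / M'(-Delta).
*)
theory Submission
  imports Defs
begin

lemma Chebyshev_integral_inequality_threshold:
  fixes M :: "'b measure" and w f g :: "'b \<Rightarrow> real" and m k :: real
  assumes w: "integrable M w" and wf: "integrable M (\<lambda>x. w x * f x)"
    and wg: "integrable M (\<lambda>x. w x * g x)" and wfg: "integrable M (\<lambda>x. w x * (f x * g x))"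
    and w_nonneg: "AE x in M. 0 \<le> w x"
    and same_sign: "AE x in M. 0 \<le> (f x - m) * (g x - k)"
    and mean: "m * (\<integral>x. w x \<partial>M) = (\<integral>x. w x * f x \<partial>M)"
  shows "(\<integral>x. w x * f x \<partial>M) * (\<integral>x. w x * g x \<partial>M)
         \<le> (\<integral>x. w x \<partial>M) * (\<integral>x. w x * (f x * g x) \<partial>M)"
proof -
  have "0 \<le> (\<integral>x. w x * ((f x - m) * (g x - k)) \<partial>M)"
    using w_nonneg same_sign by (intro integral_nonneg_AE) (auto elim: eventually_rev_mp)
  also have "\<dots> = (\<integral>x. w x * (f x * g x) - k * (w x * f x) - m * (w x * g x) + m * k * w x \<partial>M)"
    by (rule Bochner_Integration.integral_cong) (simp_all add: algebra_simps)
  also have "\<dots> = (\<integral>x. w x * (f x * g x) \<partial>M) - m * (\<integral>x. w x * g x \<partial>M)"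
    using w wf wg wfg mean by simp
  finally have "m * (\<integral>x. w x * g x \<partial>M) \<le> (\<integral>x. w x * (f x * g x) \<partial>M)"
    by simp
  moreover have "0 \<le> (\<integral>x. w x \<partial>M)"
    using w_nonneg by (rule integral_nonneg_AE)
  ultimately have "(\<integral>x. w x \<partial>M) * (m * (\<integral>x. w x * g x \<partial>M))
      \<le> (\<integral>x. w x \<partial>M) * (\<integral>x. w x * (f x * g x) \<partial>M)"
    by (rule mult_left_mono)
  then show ?thesis
    unfolding mean[symmetric] by (simp add: mult_ac)
qed

lemma exp_mult_diff_product_nonneg:
  fixes s t v c :: real
  assumes "s \<le> 0" "t \<le> 0"
  shows "0 \<le> (exp (s * v) - exp (s * c)) * (exp (t * v) - exp (t * c))"
proof (cases "v \<le> c")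
  case True
  then have "s * c \<le> s * v" "t * c \<le> t * v"
    using assms by (simp_all add: mult_left_mono_neg)
  then show ?thesis by simp
next
  case False
  then have "s * v \<le> s * c" "t * v \<le> t * c"
    using assms by (simp_all add: mult_left_mono_neg)
  then show ?thesis by (simp add: mult_nonpos_nonpos)
qed

lemma integrable_inverse_of_integrable_exp:
  fixes B :: "real measure" and t :: real
  assumes pos: "AE b in B. b > 0" and t: "t > 0" and int: "integrable B (\<lambda>b. exp (t / b))"
  shows "integrable B (\<lambda>b. 1 / b)"
proof (rule Bochner_Integration.integrable_bound[OF integrable_divide[OF int, of t]])
  have "(\<lambda>b. exp (t / b)) \<in> borel_measurable B"
    using int by (rule borel_measurable_integrable)
  then have "(\<lambda>b. ln (exp (t / b)) / t) \<in> borel_measurable B"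
    by measurable
  then show "(\<lambda>b. 1 / b) \<in> borel_measurable B"
    using t by simp
  show "AE b in B. norm (1 / b) \<le> norm (exp (t / b) / t)"
    using pos
  proof eventually_elim
    case (elim b)
    have "1 / b = (t / b) / t"
      using t by simp
    also have "\<dots> \<le> exp (t / b) / t"
      using exp_ge_add_one_self[of "t / b"] t by (intro divide_right_mono) linarith+
    finally show ?case
      using elim t by simp
  qed
qed

lemma dmgf_inv_nonneg:
  assumes "AE b in B. b > 0"
  shows "0 \<le> dmgf_inv B t"
  unfolding dmgf_inv_def using assms by (intro integral_nonneg_AE) (auto elim: eventually_mono)

context
  fixes B :: "real measure"
  assumes pos: "AE b in B. b > 0" and inverse_integrable: "integrable B (\<lambda>b. 1 / b)"
begin

lemma integrable_dmgf_inv_integrand: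
  assumes "t \<le> 0"
  shows "integrable B (\<lambda>b. 1 / b * exp (t / b))"
proof (rule Bochner_Integration.integrable_bound[OF inverse_integrable])
  have "(\<lambda>b. 1 / b) \<in> borel_measurable B"
    using inverse_integrable by (rule borel_measurable_integrable)
  then have "(\<lambda>b. 1 / b * exp (t * (1 / b))) \<in> borel_measurable B"
    by measurable
  then show "(\<lambda>b. 1 / b * exp (t / b)) \<in> borel_measurable B"
    by simp
  show "AE b in B. norm (1 / b * exp (t / b)) \<le> norm (1 / b)"
    using pos
  proof eventually_elim
    case (elim b)
    have "exp (t / b) \<le> 1"
      using assms elim by (simp add: divide_nonpos_pos)
    then show ?case
      using elim by (simp add: divide_right_mono)
  qed
qed

lemma dmgf_inv_mono:
  assumes "t \<le> t'" "t' \<le> 0"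
  shows "dmgf_inv B t \<le> dmgf_inv B t'"
  unfolding dmgf_inv_def
proof (rule integral_mono_AE)
  show "integrable B (\<lambda>b. 1 / b * exp (t / b))" "integrable B (\<lambda>b. 1 / b * exp (t' / b))"
    using assms by (intro integrable_dmgf_inv_integrand; linarith)+
  show "AE b in B. 1 / b * exp (t / b) \<le> 1 / b * exp (t' / b)"
    using pos by eventually_elim (use assms in \<open>simp add: divide_right_mono\<close>)
qed

lemma dmgf_inv_pos:
  assumes "prob_space B" "t \<le> 0"
  shows "0 < dmgf_inv B t"
proof -
  have "dmgf_inv B t \<noteq> 0"
  proof
    assume "dmgf_inv B t = 0"
    then have "AE b in B. 1 / b * exp (t / b) = 0"
      unfolding dmgf_inv_def using pos
      by (subst (asm) integral_nonneg_eq_0_iff_AE)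
         (use integrable_dmgf_inv_integrand[OF assms(2)] in \<open>auto elim: eventually_mono\<close>)
    with pos have "AE b in B. False"
      by eventually_elim simp
    with assms(1) show False
      by (simp add: prob_space.AE_False)
  qed
  with dmgf_inv_nonneg[OF pos] show ?thesis
    by (simp add: order_less_le)
qed

lemma dmgf_inv_supermult:
  assumes s: "s \<le> 0" and t: "t \<le> 0"
  shows "dmgf_inv B s * dmgf_inv B t \<le> dmgf_inv B 0 * dmgf_inv B (s + t)"
proof -
  define F W where "F = dmgf_inv B s" and "W = dmgf_inv B 0"
  consider "s = 0" | "F = 0" | "s < 0" "0 < F"
    using s dmgf_inv_nonneg[OF pos, of s] by (force simp: F_def)
  then show ?thesis
  proof cases
    case 1
    then show ?thesis by simp
  next
    case 2
    then show ?thesis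
      by (simp add: F_def dmgf_inv_nonneg[OF pos])
  next
    case 3
    have "F \<le> W"
      unfolding F_def W_def using s by (rule dmgf_inv_mono) simp
    with 3 have "0 < W" by simp
    txt \<open>The threshold \<open>c\<close> is where \<open>exp (s * c)\<close> equals the \<open>1/b\<close>-weighted mean of \<open>exp (s/b)\<close>.\<close>
    define c where "c = ln (F / W) / s"
    have mean: "exp (s * c) * (\<integral>b. 1 / b \<partial>B) = (\<integral>b. 1 / b * exp (s / b) \<partial>B)"
      using 3 \<open>0 < W\<close> by (simp add: c_def F_def W_def dmgf_inv_def)
    have "(\<integral>b. 1 / b * exp (s / b) \<partial>B) * (\<integral>b. 1 / b * exp (t / b) \<partial>B)
          \<le> (\<integral>b. 1 / b \<partial>B) * (\<integral>b. 1 / b * (exp (s / b) * exp (t / b)) \<partial>B)"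
    proof (rule Chebyshev_integral_inequality_threshold[OF inverse_integrable _ _ _ _ _ mean])
      show "integrable B (\<lambda>b. 1 / b * exp (s / b))" "integrable B (\<lambda>b. 1 / b * exp (t / b))"
        "integrable B (\<lambda>b. 1 / b * (exp (s / b) * exp (t / b)))"
        using integrable_dmgf_inv_integrand[OF s] integrable_dmgf_inv_integrand[OF t]
          integrable_dmgf_inv_integrand[of "s + t"] s t
        by (simp_all add: add_divide_distrib exp_add)
      show "AE b in B. 0 \<le> 1 / b"
        using pos by eventually_elim simp
      show "AE b in B. 0 \<le> (exp (s / b) - exp (s * c)) * (exp (t / b) - exp (t * c))"
        using exp_mult_diff_product_nonneg[OF s t, of "1 / _" c] by simp
    qed
    then show ?thesis
      by (simp add: dmgf_inv_def add_divide_distrib exp_add)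
  qed
qed

lemma dmgf_inv_shift_bound:
  assumes "0 \<le> \<Delta>" "\<bar>x - x'\<bar> \<le> \<Delta>"
  shows "dmgf_inv B (- \<bar>x\<bar>) * dmgf_inv B (- \<Delta>) \<le> dmgf_inv B 0 * dmgf_inv B (- \<bar>x'\<bar>)"
proof -
  have "dmgf_inv B (- \<bar>x\<bar>) * dmgf_inv B (- \<Delta>) \<le> dmgf_inv B 0 * dmgf_inv B (- \<bar>x\<bar> + - \<Delta>)"
    using assms(1) by (intro dmgf_inv_supermult) simp_all
  also have "\<dots> \<le> dmgf_inv B 0 * dmgf_inv B (- \<bar>x'\<bar>)"
    using assms by (intro mult_left_mono dmgf_inv_mono dmgf_inv_nonneg[OF pos]) simp_all
  finally show ?thesis .
qed

end

definition lap_mixture_density :: "real measure \<Rightarrow> real \<Rightarrow> real \<Rightarrow> ennreal" where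
  "lap_mixture_density B \<mu> x = (\<integral>\<^sup>+ b. ennreal (lap_density b (x - \<mu>)) \<partial>B)"

lemma lap_mixture_density_eq_dmgf_inv:
  assumes "AE b in B. b > 0" "integrable B (\<lambda>b. 1 / b)"
  shows "lap_mixture_density B \<mu> x = ennreal (dmgf_inv B (- \<bar>x - \<mu>\<bar>) / 2)"
proof -
  have "lap_mixture_density B \<mu> x = (\<integral>\<^sup>+ b. ennreal (1 / b * exp (- \<bar>x - \<mu>\<bar> / b) / 2) \<partial>B)"
    unfolding lap_mixture_density_def lap_density_def by (simp add: field_simps)
  also have "\<dots> = ennreal (\<integral>b. 1 / b * exp (- \<bar>x - \<mu>\<bar> / b) / 2 \<partial>B)"
    using assms integrable_divide[OF integrable_dmgf_inv_integrand[OF assms, of "- \<bar>x - \<mu>\<bar>"], of 2]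
    by (intro nn_integral_eq_integral) (auto elim: eventually_mono)
  finally show ?thesis
    by (simp only: dmgf_inv_def integral_divide_zero)
qed

lemma lap_mixture_density_ratio_le:
  assumes "prob_space B" "AE b in B. b > 0" "integrable B (\<lambda>b. 1 / b)"
    and "0 \<le> \<Delta>" "\<bar>\<mu> - \<mu>'\<bar> \<le> \<Delta>"
  shows "lap_mixture_density B \<mu> x
         \<le> ennreal (dmgf_inv B 0 / dmgf_inv B (- \<Delta>)) * lap_mixture_density B \<mu>' x"
proof -
  define W G where "W = dmgf_inv B 0" and "G = dmgf_inv B (- \<Delta>)"
  have "0 \<le> W" "0 < G"
    unfolding W_def G_def using assms by (simp_all add: dmgf_inv_nonneg dmgf_inv_pos)
  have "dmgf_inv B (- \<bar>x - \<mu>\<bar>) * G \<le> W * dmgf_inv B (- \<bar>x - \<mu>'\<bar>)"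
    unfolding W_def G_def using assms(4,5)
    by (intro dmgf_inv_shift_bound[OF assms(2,3)]) (simp_all add: abs_minus_commute)
  then have "dmgf_inv B (- \<bar>x - \<mu>\<bar>) / 2 \<le> W / G * (dmgf_inv B (- \<bar>x - \<mu>'\<bar>) / 2)"
    using \<open>0 < G\<close> by (simp add: field_simps)
  then have "ennreal (dmgf_inv B (- \<bar>x - \<mu>\<bar>) / 2) \<le> ennreal (W / G * (dmgf_inv B (- \<bar>x - \<mu>'\<bar>) / 2))"
    by (rule ennreal_leI)
  also have "\<dots> = ennreal (W / G) * ennreal (dmgf_inv B (- \<bar>x - \<mu>'\<bar>) / 2)"
    using \<open>0 \<le> W\<close> \<open>0 < G\<close> by (intro ennreal_mult) (simp_all add: dmgf_inv_nonneg[OF assms(2)])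
  finally show ?thesis
    unfolding lap_mixture_density_eq_dmgf_inv[OF assms(2,3)] W_def G_def .
qed

context
  fixes B :: "real measure"
  assumes sets_B: "sets B = sets borel"
begin

lemma measurable_lap_density_pair:
  "(\<lambda>(x, b). ennreal (lap_density b (x - \<mu>))) \<in> borel_measurable (lborel \<Otimes>\<^sub>M B)"
proof -
  have "sets (lborel \<Otimes>\<^sub>M B) = sets (borel \<Otimes>\<^sub>M (borel :: real measure))"
    using sets_pair_measure_cong[OF sets_lborel sets_B] by simp
  then have pair_borel: "borel_measurable (lborel \<Otimes>\<^sub>M B)
      = (borel_measurable (borel \<Otimes>\<^sub>M borel) :: (real \<times> real \<Rightarrow> ennreal) set)"
    by (rule measurable_cong_sets) simp
  show ?thesis
    unfolding pair_borel lap_density_def by measurable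
qed

lemma borel_measurable_lap_mixture_density:
  assumes "sigma_finite_measure B"
  shows "lap_mixture_density B \<mu> \<in> borel_measurable lborel"
  unfolding lap_mixture_density_def
  using sigma_finite_measure.borel_measurable_nn_integral[OF assms measurable_lap_density_pair] .

lemma r2dp_laplace_eq_nn_integral:
  assumes "sigma_finite_measure B" and S: "S \<in> sets borel"
  shows "r2dp_laplace B q d S = (\<integral>\<^sup>+ x. lap_mixture_density B (q d) x * indicator S x \<partial>lborel)"
proof -
  interpret pair_sigma_finite lborel B
    by (simp add: pair_sigma_finite_def assms(1) lborel.sigma_finite_measure_axioms)
  have joint: "(\<lambda>(x, b). ennreal (lap_density b (x - q d)) * indicator S x)
      \<in> borel_measurable (lborel \<Otimes>\<^sub>M B)"
    using measurable_lap_density_pair S by measurable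
  have "r2dp_laplace B q d S
      = (\<integral>\<^sup>+ b. \<integral>\<^sup>+ x. ennreal (lap_density b (x - q d)) * indicator S x \<partial>lborel \<partial>B)"
    unfolding r2dp_laplace_def lap_measure_def using S
    by (intro nn_integral_cong) (simp add: emeasure_density lap_density_def)
  also have "\<dots> = (\<integral>\<^sup>+ x. \<integral>\<^sup>+ b. ennreal (lap_density b (x - q d)) * indicator S x \<partial>B \<partial>lborel)"
    using Fubini'[OF joint] by simp
  also have "\<dots> = (\<integral>\<^sup>+ x. lap_mixture_density B (q d) x * indicator S x \<partial>lborel)"
    unfolding lap_mixture_density_def
    by (intro nn_integral_cong nn_integral_multc)
       (simp add: measurable_cong_sets[OF sets_B refl] lap_density_def)
  finally show ?thesis .
qed

lemma r2dp_laplace_le_of_density_le: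
  assumes "sigma_finite_measure B" "S \<in> sets borel"
    and "\<And>x. lap_mixture_density B (q d) x \<le> c * lap_mixture_density B (q d') x"
  shows "r2dp_laplace B q d S \<le> c * r2dp_laplace B q d' S"
proof -
  have "r2dp_laplace B q d S = (\<integral>\<^sup>+ x. lap_mixture_density B (q d) x * indicator S x \<partial>lborel)"
    using assms(1,2) by (rule r2dp_laplace_eq_nn_integral)
  also have "\<dots> \<le> (\<integral>\<^sup>+ x. c * (lap_mixture_density B (q d') x * indicator S x) \<partial>lborel)"
    using assms(3) by (intro nn_integral_mono) (simp add: indicator_def)
  also have "\<dots> = c * r2dp_laplace B q d' S"
    using borel_measurable_lap_mixture_density[OF assms(1)] assms(2)
    by (simp add: nn_integral_cmult r2dp_laplace_eq_nn_integral[OF assms(1,2)])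
  finally show ?thesis .
qed

end

lemma abs_diff_le_sensitivity:
  assumes "bdd_above {\<bar>q d - q d'\<bar> | d d'. adjacent d d'}" "adjacent d d'"
  shows "\<bar>q d - q d'\<bar> \<le> sensitivity q"
proof -
  have "(\<lambda>p. \<bar>q (fst p) - q (snd p)\<bar>) ` {(d, d'). adjacent d d'}
      = {\<bar>q d - q d'\<bar> | d d'. adjacent d d'}"
    by force
  then have "(\<lambda>p. \<bar>q (fst p) - q (snd p)\<bar>) (d, d') \<le> sensitivity q"
    unfolding sensitivity_def using assms by (intro cSUP_upper) auto
  then show ?thesis
    by simp
qed

lemma sensitivity_nonneg:
  assumes "bdd_above {\<bar>q d - q d'\<bar> | d d'. adjacent d d'}"
  shows "0 \<le> sensitivity q"
proof -
  have "adjacent {#} {#x#}" for x :: 'a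
    by (simp add: adjacent_def)
  from abs_diff_le_sensitivity[OF assms this] show ?thesis
    by (meson abs_ge_zero order_trans)
qed

theorem theorem4p1:
  fixes B :: "real measure" and q :: "'a multiset \<Rightarrow> real"
  assumes "prob_space B"
    and "sets B = sets borel"
    and "AE b in B. b > 0"
    and "bdd_above {\<bar>q d - q d'\<bar> | d d'. adjacent d d'}"
    and "\<exists>\<delta>>0. \<forall>t\<in>{-\<delta><..<\<delta>}. integrable B (\<lambda>b. exp (t / b))"
  shows "differentially_private
           (ln ((\<integral> b. 1 / b \<partial>B) / dmgf_inv B (- sensitivity q)))
           (r2dp_laplace B q)"
proof -
  interpret B: prob_space B by fact
  obtain \<delta> where \<delta>: "\<delta> > 0" "\<forall>t\<in>{-\<delta><..<\<delta>}. integrable B (\<lambda>b. exp (t / b))"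
    using assms(5) by blast
  have "integrable B (\<lambda>b. exp ((\<delta> / 2) / b))"
    using \<delta> by (intro \<delta>(2)[rule_format]) simp
  then have inv: "integrable B (\<lambda>b. 1 / b)"
    by (rule integrable_inverse_of_integrable_exp[OF assms(3) half_gt_zero[OF \<delta>(1)]])
  define \<Delta> W G where "\<Delta> = sensitivity q" and "W = dmgf_inv B 0" and "G = dmgf_inv B (- \<Delta>)"
  have "0 \<le> \<Delta>"
    unfolding \<Delta>_def using assms(4) by (rule sensitivity_nonneg)
  then have "0 < W" "0 < G"
    unfolding W_def G_def using dmgf_inv_pos[OF assms(3) inv assms(1)] by simp_all
  then have eps: "exp (ln ((\<integral> b. 1 / b \<partial>B) / G)) = W / G"
    by (simp add: W_def dmgf_inv_def)
  show ?thesis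
    unfolding differentially_private_def \<Delta>_def[symmetric] G_def[symmetric] eps
  proof (intro allI impI ballI)
    fix d d' :: "'a multiset" and S :: "real set"
    assume "adjacent d d'" "S \<in> sets borel"
    then show "r2dp_laplace B q d S \<le> ennreal (W / G) * r2dp_laplace B q d' S"
      unfolding W_def G_def \<Delta>_def
      using assms \<open>0 \<le> \<Delta>\<close> abs_diff_le_sensitivity[OF assms(4)] inv
      by (intro r2dp_laplace_le_of_density_le B.sigma_finite_measure_axioms
          lap_mixture_density_ratio_le) (simp_all add: \<Delta>_def)
  qed
qed

end
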